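(* Let $\{P_{(\beta,\eta,\zeta)}\}$ be a semiparametric model with $\beta\in\mathbb R^p$, $\zeta\in\Xi\subset\mathbb R^q$, $\eta\in\mathcal H_\eta$ (a subset of a Banach space), and let $\phi_\zeta:\mathcal H_\eta\to\mathcal H_\eta$ be a full rank reparameterization (defined in the context), with $\bar\eta=\phi_\zeta(\eta)$ and $\bar\theta=(\beta,\bar\eta,\zeta)$. Then for every $(\beta,\eta,\zeta)$ the efficient score for $\beta$ computed in the original parameterization at $\theta=(\beta,\eta,\zeta)$ equals the efficient score for $\beta$ computed in the reparameterized model at $\bar\theta=(\beta,\phi_\zeta(\eta),\zeta)$, i.e. $\tilde l_\beta(\theta)=\tilde\ell_\beta(\bar\theta)$. Consequently the efficient information matrices $\tilde I_\beta(\theta)=P_\theta\tilde l_\beta\tilde l_\beta^T$ and $\tilde{\mathcal I}_\beta(\bar\theta)=P_\theta\tilde\ell_\beta\tilde\ell_\beta^T$ also coincide.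
   Context: Let $\dot l_\beta$ denote the score for $\beta$ (derivative of the one-observation log-likelihood in $\beta$), and let $\dot l_\eta:\overline{\mathcal H}_\eta\to L_2^0(P_\theta)$ be the score operator for $\eta$ (a bounded linear map, $\overline{\mathcal H}_\eta$ the closed linear span of $\mathcal H_\eta$, $L_2^0(P_\theta)$ the mean-zero square integrable functions), with adjoint $\dot l_\eta^*$; assume the information operator $\dot l_\eta^*\dot l_\eta$ is invertible. The efficient score is $\tilde l_\beta=(I-\dot l_\eta(\dot l_\eta^*\dot l_\eta)^{-1}\dot l_\eta^* )\dot l_\beta$; analogously $\tilde\ell_\beta$ is defined with $\dot\ell_{\bar\eta}$, the score operator for $\bar\eta$ in the reparameterized model $\ell_1(\beta,\bar\eta,\zeta)=l_1(\beta,\phi_\zeta^{-1}(\bar\eta),\zeta)$. A full rank reparameterization is a family of one-to-one maps $\phi_\zeta:\mathcal H_\eta\to\mathcal H_\eta$, $\zeta\in\Xi$, that is Hadamard differentiable tangentially to $\mathcal H_\eta$ uniformly over $\zeta\in\Xi$ (i.e. $\sup_\zeta\|(\phi_\zeta(\eta+t_nh_n(\zeta))-\phi_\zeta(\eta))/t_n-\dot\phi_\zeta(\eta)(h(\zeta))\|\to0$ whenever $t_n\to0$ and $\sup_\zeta\|h_n(\zeta)-h(\zeta)\|\to0$), whose derivative $\dot\phi_\zeta$ is linear, one-to-one and continuously invertible uniformly over $\zeta$ (there is $c>0$ with $\|\dot\phi_\zeta(h)\|\ge c\|h\|$ for all $h,\zeta$), and such that under the null $\beta=\beta_0$ the reparameterized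 likelihood $\ell_1(\beta_0,\bar\eta,\zeta)$ does not depend on $\zeta$ at the null value $\bar\eta_0$. *)

theory Defs
  imports "HOL-Probability.Probability"
begin

definition cspan :: "'h::real_normed_vector set \<Rightarrow> 'h set" where
  "cspan H = closure (span H)"

definition L2_0 :: "'x measure \<Rightarrow> ('x \<Rightarrow> real) \<Rightarrow> bool" where
  "L2_0 M f \<longleftrightarrow> f \<in> borel_measurable M \<and> integrable M (\<lambda>x. (f x)\<^sup>2) \<and> integral\<^sup>L M f = 0"

definition ip :: "'x measure \<Rightarrow> ('x \<Rightarrow> real) \<Rightarrow> ('x \<Rightarrow> real) \<Rightarrow> real" where
  "ip M f g = integral\<^sup>L M (\<lambda>x. f x * g x)"

definition model_measure ::
  "'x measure \<Rightarrow> ('b \<Rightarrow> 'e \<Rightarrow> 'z \<Rightarrow> 'x \<Rightarrow> real) \<Rightarrow> 'b \<Rightarrow> 'e \<Rightarrow> 'z \<Rightarrow> 'x measure" where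
  "model_measure \<mu> l b e z = density \<mu> (\<lambda>x. ennreal (exp (l b e z x)))"

definition beta_score ::
  "'x measure \<Rightarrow> (real^'p \<Rightarrow> 'x \<Rightarrow> real) \<Rightarrow> real^'p \<Rightarrow> ('x \<Rightarrow> real^'p) \<Rightarrow> bool" where
  "beta_score M L b0 s \<longleftrightarrow>
     (\<forall>x. ((\<lambda>b. L b x) has_derivative (\<lambda>v. v \<bullet> s x)) (at b0)) \<and>
     (\<forall>j. L2_0 M (\<lambda>x. s x $ j))"

definition score_op ::
  "'x measure \<Rightarrow> 'h::real_normed_vector set \<Rightarrow> 'h set \<Rightarrow> ('h \<Rightarrow> 'x \<Rightarrow> real) \<Rightarrow> 'h
     \<Rightarrow> ('h \<Rightarrow> 'x \<Rightarrow> real) \<Rightarrow> bool" where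
  "score_op M \<Theta> H L e0 A \<longleftrightarrow>
     (\<forall>h\<in>cspan H. L2_0 M (A h)) \<and>
     (\<forall>h\<in>cspan H. \<forall>k\<in>cspan H. \<forall>a b::real.
        AE x in M. A (a *\<^sub>R h + b *\<^sub>R k) x = a * A h x + b * A k x) \<and>
     (\<exists>C. \<forall>h\<in>cspan H. ip M (A h) (A h) \<le> C * (norm h)\<^sup>2) \<and>
     (\<forall>h\<in>H. \<exists>\<gamma>. \<gamma> 0 = e0 \<and> at 0 within {t. \<gamma> t \<in> \<Theta>} \<noteq> bot \<and>
        ((\<lambda>t. (\<gamma> t - e0) /\<^sub>R t) \<longlongrightarrow> h) (at 0 within {t. \<gamma> t \<in> \<Theta>})) \<and>
     (\<forall>\<gamma> h. h \<in> cspan H \<and> \<gamma> 0 = e0 \<and>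
        ((\<lambda>t. (\<gamma> t - e0) /\<^sub>R t) \<longlongrightarrow> h) (at 0 within {t. \<gamma> t \<in> \<Theta>}) \<longrightarrow>
        (\<forall>x. ((\<lambda>t. (L (\<gamma> t) x - L e0 x) / t) \<longlongrightarrow> A h x) (at 0 within {t. \<gamma> t \<in> \<Theta>})))"

text \<open>The information operator A^* A (A^* g is the functional k \<mapsto> <A k, g> on the
  closed span) is invertible: every bounded linear functional F on the closed span
  equals A^* A u for exactly one u in the closed span.\<close>
definition info_invertible ::
  "'x measure \<Rightarrow> 'h::real_normed_vector set \<Rightarrow> ('h \<Rightarrow> 'x \<Rightarrow> real) \<Rightarrow> bool" where
  "info_invertible M H A \<longleftrightarrow>
     (\<forall>F. (\<forall>h\<in>cspan H. \<forall>k\<in>cspan H. \<forall>a b::real. F (a *\<^sub>R h + b *\<^sub>R k) = a * F h + b * F k) \<and>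
          (\<exists>C. \<forall>h\<in>cspan H. \<bar>F h\<bar> \<le> C * norm h) \<longrightarrow>
          (\<exists>!u. u \<in> cspan H \<and> (\<forall>k\<in>cspan H. ip M (A k) (A u) = F k)))"

text \<open>Efficient score (I - A (A^*A)^{-1} A^*) s, componentwise.\<close>
definition eff_score ::
  "'x measure \<Rightarrow> 'h::real_normed_vector set \<Rightarrow> ('h \<Rightarrow> 'x \<Rightarrow> real) \<Rightarrow> ('x \<Rightarrow> real^'p)
     \<Rightarrow> 'x \<Rightarrow> real^'p" where
  "eff_score M H A s = (\<lambda>x. \<chi> j. s x $ j -
      A (THE u. u \<in> cspan H \<and> (\<forall>k\<in>cspan H. ip M (A k) (A u) = ip M (A k) (\<lambda>y. s y $ j))) x)"

definition eff_info :: "'x measure \<Rightarrow> ('x \<Rightarrow> real^'p) \<Rightarrow> real^'p^'p" where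
  "eff_info M e = (\<chi> i j. integral\<^sup>L M (\<lambda>x. e x $ i * e x $ j))"

definition reparam_lik ::
  "'h set \<Rightarrow> ('z \<Rightarrow> 'h \<Rightarrow> 'h) \<Rightarrow> ('b \<Rightarrow> 'h \<Rightarrow> 'z \<Rightarrow> 'x \<Rightarrow> real) \<Rightarrow> 'b \<Rightarrow> 'h \<Rightarrow> 'z \<Rightarrow> 'x \<Rightarrow> real" where
  "reparam_lik H \<phi> l b eb z x = l b (inv_into H (\<phi> z) eb) z x"

definition hadamard_unif ::
  "'h::real_normed_vector set \<Rightarrow> 'z set \<Rightarrow> ('z \<Rightarrow> 'h \<Rightarrow> 'h) \<Rightarrow> 'h \<Rightarrow> ('z \<Rightarrow> 'h \<Rightarrow> 'h) \<Rightarrow> bool" where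
  "hadamard_unif H \<Xi> \<phi> e0 D \<longleftrightarrow>
     (\<forall>(t::nat \<Rightarrow> real) (hs::nat \<Rightarrow> 'z \<Rightarrow> 'h) (h::'z \<Rightarrow> 'h).
        t \<longlonglongrightarrow> 0 \<and> (\<forall>n. t n \<noteq> 0) \<and> (\<forall>n. \<forall>z\<in>\<Xi>. e0 + t n *\<^sub>R hs n z \<in> H) \<and>
        (\<forall>z\<in>\<Xi>. h z \<in> H) \<and>
        (\<forall>\<epsilon>>0. \<forall>\<^sub>F n in sequentially. \<forall>z\<in>\<Xi>. norm (hs n z - h z) < \<epsilon>) \<longrightarrow>
        (\<forall>\<epsilon>>0. \<forall>\<^sub>F n in sequentially. \<forall>z\<in>\<Xi>.
           norm ((\<phi> z (e0 + t n *\<^sub>R hs n z) - \<phi> z e0) /\<^sub>R t n - D z (h z)) < \<epsilon>))"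

text \<open>Full rank reparameterization (with null value b0 of beta and null value eb0 of
  the reparameterized nuisance parameter).\<close>
definition full_rank_reparam ::
  "'h::real_normed_vector set \<Rightarrow> 'z set \<Rightarrow> ('z \<Rightarrow> 'h \<Rightarrow> 'h) \<Rightarrow> ('h \<Rightarrow> 'z \<Rightarrow> 'h \<Rightarrow> 'h)
     \<Rightarrow> ('b \<Rightarrow> 'h \<Rightarrow> 'z \<Rightarrow> 'x \<Rightarrow> real) \<Rightarrow> 'b \<Rightarrow> 'h \<Rightarrow> bool" where
  "full_rank_reparam H \<Xi> \<phi> D l b0 eb0 \<longleftrightarrow>
     (\<forall>z\<in>\<Xi>. \<phi> z ` H \<subseteq> H \<and> inj_on (\<phi> z) H) \<and>
     (\<forall>e\<in>H. hadamard_unif H \<Xi> \<phi> e (D e)) \<and>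
     (\<forall>e\<in>H. \<forall>z\<in>\<Xi>.
        (\<forall>h\<in>cspan H. \<forall>k\<in>cspan H. \<forall>a b::real.
           D e z (a *\<^sub>R h + b *\<^sub>R k) = a *\<^sub>R D e z h + b *\<^sub>R D e z k) \<and>
        (\<exists>C. \<forall>h\<in>cspan H. norm (D e z h) \<le> C * norm h) \<and>
        inj_on (D e z) (cspan H) \<and> D e z ` cspan H = cspan H) \<and>
     (\<forall>e\<in>H. \<exists>c>0. \<forall>z\<in>\<Xi>. \<forall>h\<in>cspan H. c * norm h \<le> norm (D e z h)) \<and>
     (\<forall>z\<in>\<Xi>. \<forall>z'\<in>\<Xi>. \<forall>x. reparam_lik H \<phi> l b0 eb0 z x = reparam_lik H \<phi> l b0 eb0 z' x)"

end

theory Submission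
  imports Defs
begin

(* At the point eta_bar = phi_zeta(eta) the reparameterized likelihood is the original
   one, so the two models share the distribution P and the beta-score s.  By the chain rule
   along submodels, the reparameterized nuisance score operator Ab satisfies Ab (D h) = A h,
   D the (Hadamard) derivative of phi_zeta: first for directions h in H, then by
   linearity and L_2-continuity on the closed span of H.  The normal equations
   A^*A u = A^* s_j and Ab^*Ab v = Ab^* s_j therefore correspond under v = D u, and since D
   maps the closed span onto itself the projections A u and Ab (D u) coincide a.e. *)


lemma subspace_cspan: "subspace (cspan (H::'h::real_normed_vector set))"
  unfolding subspace_def cspan_def
proof (intro conjI ballI allI)
  show "0 \<in> closure (span H)" using closure_subset span_zero by blast
next
  fix x y assume "x \<in> closure (span H)" "y \<in> closure (span H)"
  then obtain a b where a: "\<forall>n. a n \<in> span H" "a \<longlonglongrightarrow> x" and b: "\<forall>n. b n \<in> span H" "b \<longlonglongrightarrow> y"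
    by (auto simp: closure_sequential)
  then have "\<forall>n. a n + b n \<in> span H" "(\<lambda>n. a n + b n) \<longlonglongrightarrow> x + y"
    by (auto simp: span_add intro: tendsto_add)
  then show "x + y \<in> closure (span H)" by (auto simp: closure_sequential)
next
  fix c :: real and x assume "x \<in> closure (span H)"
  then obtain a where a: "\<forall>n. a n \<in> span H" "a \<longlonglongrightarrow> x" by (auto simp: closure_sequential)
  then have "\<forall>n. c *\<^sub>R a n \<in> span H" "(\<lambda>n. c *\<^sub>R a n) \<longlonglongrightarrow> c *\<^sub>R x"
    by (auto simp: span_mul intro: tendsto_scaleR)
  then show "c *\<^sub>R x \<in> closure (span H)" by (auto simp: closure_sequential)
qed

lemma closed_cspan: "closed (cspan H)"
  unfolding cspan_def by simp

lemma span_subset_cspan: "span H \<subseteq> cspan H"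
  unfolding cspan_def by (rule closure_subset)

lemma subset_cspan: "H \<subseteq> cspan H"
  using span_subset_cspan span_superset by blast

(* Products of square integrable functions are integrable, by |fg| <= f^2 + g^2. *)
lemma integrable_mult_L2:
  fixes f g :: "'a \<Rightarrow> real"
  assumes "f \<in> borel_measurable M" "g \<in> borel_measurable M"
    and "integrable M (\<lambda>x. (f x)\<^sup>2)" "integrable M (\<lambda>x. (g x)\<^sup>2)"
  shows "integrable M (\<lambda>x. f x * g x)"
proof (rule Bochner_Integration.integrable_bound[where f="\<lambda>x. (f x)\<^sup>2 + (g x)\<^sup>2"])
  show "integrable M (\<lambda>x. (f x)\<^sup>2 + (g x)\<^sup>2)" using assms by auto
  show "(\<lambda>x. f x * g x) \<in> borel_measurable M" using assms by measurable
  have "norm (f x * g x) \<le> norm ((f x)\<^sup>2 + (g x)\<^sup>2)" for x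
  proof -
    have "2 * \<bar>f x\<bar> * \<bar>g x\<bar> \<le> (f x)\<^sup>2 + (g x)\<^sup>2"
      using sum_squares_bound[of "\<bar>f x\<bar>" "\<bar>g x\<bar>"] by simp
    moreover have "0 \<le> \<bar>f x\<bar> * \<bar>g x\<bar>" by simp
    ultimately have "\<bar>f x\<bar> * \<bar>g x\<bar> \<le> (f x)\<^sup>2 + (g x)\<^sup>2" by linarith
    then show ?thesis by (simp add: abs_mult)
  qed
  then show "AE x in M. norm (f x * g x) \<le> norm ((f x)\<^sup>2 + (g x)\<^sup>2)" by simp
qed

lemma ip_cong_AE:
  fixes f g f' g' :: "'a \<Rightarrow> real"
  assumes "f \<in> borel_measurable M" "g \<in> borel_measurable M"
    and "f' \<in> borel_measurable M" "g' \<in> borel_measurable M"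
    and "AE x in M. f x = f' x" "AE x in M. g x = g' x"
  shows "ip M f g = ip M f' g'"
  unfolding ip_def by (rule integral_cong_AE) (use assms in auto)

(* Weighted AM-GM; used to bound |<A h, g>| linearly in norm h without Cauchy-Schwarz. *)
lemma abs_mult_le_weighted_squares:
  fixes a b n :: real
  assumes "n > 0"
  shows "\<bar>a * b\<bar> \<le> (a\<^sup>2 / n + n * b\<^sup>2) / 2"
proof -
  have "2 * \<bar>a\<bar> * (n * \<bar>b\<bar>) \<le> a\<^sup>2 + (n * \<bar>b\<bar>)\<^sup>2"
    using sum_squares_bound[of "\<bar>a\<bar>" "n * \<bar>b\<bar>"] by simp
  then show ?thesis
    using assms by (simp add: abs_mult field_simps power2_eq_square)
qed

definition L2_op :: "'x measure \<Rightarrow> 'h::real_normed_vector set \<Rightarrow> ('h \<Rightarrow> 'x \<Rightarrow> real) \<Rightarrow> bool" where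
  "L2_op M V A \<longleftrightarrow>
     (\<forall>h\<in>V. A h \<in> borel_measurable M \<and> integrable M (\<lambda>x. (A h x)\<^sup>2)) \<and>
     (\<forall>h\<in>V. \<forall>k\<in>V. \<forall>a b::real. AE x in M. A (a *\<^sub>R h + b *\<^sub>R k) x = a * A h x + b * A k x) \<and>
     (\<exists>C. \<forall>h\<in>V. ip M (A h) (A h) \<le> C * (norm h)\<^sup>2)"

lemma score_op_imp_L2_op: "score_op M \<Theta> H L e0 A \<Longrightarrow> L2_op M (cspan H) A"
  unfolding score_op_def L2_op_def L2_0_def by blast

lemma L2_opD:
  assumes "L2_op M V A" "h \<in> V"
  shows "A h \<in> borel_measurable M" "integrable M (\<lambda>x. (A h x)\<^sup>2)"
  using assms unfolding L2_op_def by auto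

lemma L2_op_compose:
  assumes A: "L2_op M V A" and maps: "D ` V \<subseteq> V"
    and lin: "\<forall>h\<in>V. \<forall>k\<in>V. \<forall>a b::real. D (a *\<^sub>R h + b *\<^sub>R k) = a *\<^sub>R D h + b *\<^sub>R D k"
    and bounded: "\<exists>C. \<forall>h\<in>V. norm (D h) \<le> C * norm h"
  shows "L2_op M V (\<lambda>h. A (D h))"
proof -
  obtain CA where CA: "\<forall>h\<in>V. ip M (A h) (A h) \<le> CA * (norm h)\<^sup>2"
    using A unfolding L2_op_def by blast
  obtain CD where CD: "\<forall>h\<in>V. norm (D h) \<le> CD * norm h" using bounded by blast
  have "ip M (A (D h)) (A (D h)) \<le> (\<bar>CA\<bar> * CD\<^sup>2) * (norm h)\<^sup>2" if h: "h \<in> V" for h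
  proof -
    have "(norm (D h))\<^sup>2 \<le> (CD * norm h)\<^sup>2"
      using CD h by (intro power_mono) auto
    then have "\<bar>CA\<bar> * (norm (D h))\<^sup>2 \<le> \<bar>CA\<bar> * (CD\<^sup>2 * (norm h)\<^sup>2)"
      by (intro mult_left_mono) (auto simp: power_mult_distrib)
    moreover have "CA * (norm (D h))\<^sup>2 \<le> \<bar>CA\<bar> * (norm (D h))\<^sup>2"
      by (intro mult_right_mono) auto
    moreover have "ip M (A (D h)) (A (D h)) \<le> CA * (norm (D h))\<^sup>2"
      using CA maps h by blast
    ultimately show ?thesis by (simp add: mult.assoc)
  qed
  then show ?thesis
    using A maps lin unfolding L2_op_def by (auto simp: image_subset_iff)
qed

lemma L2_op_diff:
  assumes F: "L2_op M V F" and G: "L2_op M V G"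
  shows "L2_op M V (\<lambda>h x. F h x - G h x)"
proof -
  obtain CF CG where CF: "\<forall>h\<in>V. ip M (F h) (F h) \<le> CF * (norm h)\<^sup>2"
    and CG: "\<forall>h\<in>V. ip M (G h) (G h) \<le> CG * (norm h)\<^sup>2"
    using F G unfolding L2_op_def by blast
  have sq: "integrable M (\<lambda>x. (F h x - G h x)\<^sup>2)" if h: "h \<in> V" for h
  proof -
    have "integrable M (\<lambda>x. (F h x)\<^sup>2 + (G h x)\<^sup>2 - 2 * (F h x * G h x))"
      using integrable_mult_L2[OF L2_opD(1)[OF F h] L2_opD(1)[OF G h] L2_opD(2)[OF F h] L2_opD(2)[OF G h]]
        L2_opD[OF F h] L2_opD[OF G h] by auto
    then show ?thesis by (simp add: power2_diff mult.assoc)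
  qed
  have bound: "ip M (\<lambda>x. F h x - G h x) (\<lambda>x. F h x - G h x) \<le> (2 * (\<bar>CF\<bar> + \<bar>CG\<bar>)) * (norm h)\<^sup>2"
    if h: "h \<in> V" for h
  proof -
    have pt: "(a - b)\<^sup>2 \<le> 2 * a\<^sup>2 + 2 * b\<^sup>2" for a b :: real
      using zero_le_power2[of "a + b"] by (simp add: power2_diff power2_sum)
    have "ip M (\<lambda>x. F h x - G h x) (\<lambda>x. F h x - G h x) \<le> integral\<^sup>L M (\<lambda>x. 2 * (F h x)\<^sup>2 + 2 * (G h x)\<^sup>2)"
      unfolding ip_def power2_eq_square[symmetric]
    proof (rule integral_mono)
      show "integrable M (\<lambda>x. (F h x - G h x)\<^sup>2)" by (rule sq[OF h])
      show "integrable M (\<lambda>x. 2 * (F h x)\<^sup>2 + 2 * (G h x)\<^sup>2)"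
        using L2_opD[OF F h] L2_opD[OF G h] by simp
    qed (rule pt)
    also have "\<dots> = 2 * ip M (F h) (F h) + 2 * ip M (G h) (G h)"
      using L2_opD[OF F h] L2_opD[OF G h] by (simp add: ip_def power2_eq_square)
    also have "\<dots> \<le> 2 * (\<bar>CF\<bar> * (norm h)\<^sup>2) + 2 * (\<bar>CG\<bar> * (norm h)\<^sup>2)"
    proof -
      have "CF * (norm h)\<^sup>2 \<le> \<bar>CF\<bar> * (norm h)\<^sup>2" "CG * (norm h)\<^sup>2 \<le> \<bar>CG\<bar> * (norm h)\<^sup>2"
        by (intro mult_right_mono; simp)+
      moreover have "ip M (F h) (F h) \<le> CF * (norm h)\<^sup>2" "ip M (G h) (G h) \<le> CG * (norm h)\<^sup>2"
        using CF CG h by blast+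
      ultimately show ?thesis by linarith
    qed
    finally show ?thesis by (simp add: algebra_simps)
  qed
  have lin: "AE x in M. F (a *\<^sub>R h + b *\<^sub>R k) x - G (a *\<^sub>R h + b *\<^sub>R k) x
               = a * (F h x - G h x) + b * (F k x - G k x)" if "h \<in> V" "k \<in> V" for h k a b
  proof -
    have "AE x in M. F (a *\<^sub>R h + b *\<^sub>R k) x = a * F h x + b * F k x"
      "AE x in M. G (a *\<^sub>R h + b *\<^sub>R k) x = a * G h x + b * G k x"
      using F G that unfolding L2_op_def by blast+
    then show ?thesis by eventually_elim (simp add: algebra_simps)
  qed
  have "(\<lambda>x. F h x - G h x) \<in> borel_measurable M" if "h \<in> V" for h
    using L2_opD[OF F that] L2_opD[OF G that] by measurable
  then show ?thesis
    unfolding L2_op_def using sq bound lin by blast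
qed

(* An L_2 operator vanishing a.e. on H vanishes a.e. on the closed span of H: its a.e.-kernel
   is a subspace (AE-linearity) and closed (boundedness), so it contains closure (span H). *)
lemma L2_op_kernel_cspan:
  assumes E: "L2_op M (cspan H) E" and zero: "\<forall>h\<in>H. AE x in M. E h x = 0"
    and h: "h \<in> cspan H"
  shows "AE x in M. E h x = 0"
proof -
  define Z where "Z = {h \<in> cspan H. AE x in M. E h x = 0}"
  have lin: "AE x in M. E (a *\<^sub>R h + b *\<^sub>R k) x = a * E h x + b * E k x"
    if "h \<in> cspan H" "k \<in> cspan H" for h k a b
    using E that unfolding L2_op_def by blast
  obtain C where C: "\<forall>h\<in>cspan H. ip M (E h) (E h) \<le> C * (norm h)\<^sup>2"
    using E unfolding L2_op_def by blast
  have "subspace Z"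
    unfolding subspace_def
  proof (intro conjI ballI allI)
    have "AE x in M. E 0 x = 0"
      using lin[OF subspace_0[OF subspace_cspan] subspace_0[OF subspace_cspan], of 0 0] by simp
    then show "0 \<in> Z" unfolding Z_def using subspace_0[OF subspace_cspan] by blast
  next
    fix x y assume "x \<in> Z" "y \<in> Z"
    then have "x \<in> cspan H" "y \<in> cspan H" "AE z in M. E x z = 0" "AE z in M. E y z = 0"
      unfolding Z_def by auto
    moreover from this have "AE z in M. E (x + y) z = E x z + E y z" using lin[of x y 1 1] by simp
    ultimately show "x + y \<in> Z"
      unfolding Z_def by (auto intro: subspace_add[OF subspace_cspan] elim!: AE_mp)
  next
    fix c :: real and x assume "x \<in> Z"
    then have "x \<in> cspan H" "AE z in M. E x z = 0" unfolding Z_def by auto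
    moreover from this have "AE z in M. E (c *\<^sub>R x) z = c * E x z" using lin[of x x c 0] by simp
    ultimately show "c *\<^sub>R x \<in> Z"
      unfolding Z_def by (auto intro: subspace_scale[OF subspace_cspan] elim!: AE_mp)
  qed
  moreover have "closed Z"
    unfolding closed_sequential_limits
  proof (intro allI impI, elim conjE)
    fix hs g assume hs: "\<forall>n. hs n \<in> Z" and lim: "hs \<longlonglongrightarrow> g"
    have g: "g \<in> cspan H"
      using hs lim closed_cspan unfolding Z_def closed_sequential_limits by blast
    have Eg: "integrable M (\<lambda>x. (E g x)\<^sup>2)" using L2_opD[OF E g] by simp
    have "integral\<^sup>L M (\<lambda>x. (E g x)\<^sup>2) \<le> C * (norm (g - hs n))\<^sup>2" for n
    proof -
      have hn: "hs n \<in> cspan H" "AE x in M. E (hs n) x = 0" using hs unfolding Z_def by auto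
      have d: "g - hs n \<in> cspan H" using subspace_diff[OF subspace_cspan g hn(1)] .
      have "AE x in M. E g x = E (g - hs n) x"
        using lin[OF d hn(1), of 1 1] hn(2) by eventually_elim simp
      then have "integral\<^sup>L M (\<lambda>x. (E g x)\<^sup>2) = ip M (E (g - hs n)) (E (g - hs n))"
        unfolding ip_def power2_eq_square
        by (intro integral_cong_AE) (use L2_opD[OF E g] L2_opD[OF E d] in auto)
      then show ?thesis using C d by simp
    qed
    moreover have "(\<lambda>n. C * (norm (g - hs n))\<^sup>2) \<longlonglongrightarrow> C * (norm (g - g))\<^sup>2"
      by (intro tendsto_intros lim)
    ultimately have "integral\<^sup>L M (\<lambda>x. (E g x)\<^sup>2) \<le> 0"
      by (intro LIMSEQ_le_const[where X="\<lambda>n. C * (norm (g - hs n))\<^sup>2"]) auto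
    moreover have "0 \<le> integral\<^sup>L M (\<lambda>x. (E g x)\<^sup>2)" by simp
    ultimately have "AE x in M. (E g x)\<^sup>2 = 0"
      using integral_nonneg_eq_0_iff_AE[OF Eg] by simp
    then show "g \<in> Z" unfolding Z_def using g by auto
  qed
  moreover have "H \<subseteq> Z" using zero subset_cspan unfolding Z_def by blast
  ultimately have "cspan H \<subseteq> Z"
    unfolding cspan_def by (intro closure_minimal span_minimal)
  then show ?thesis using h unfolding Z_def by blast
qed

lemma L2_op_agree_cspan:
  assumes "L2_op M (cspan H) F" "L2_op M (cspan H) G"
    and "\<forall>h\<in>H. AE x in M. F h x = G h x" and "h \<in> cspan H"
  shows "AE x in M. F h x = G h x"
  using L2_op_kernel_cspan[OF L2_op_diff[OF assms(1,2)], of h] assms(3,4) by simp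

(* Invertibility of the information operator A^*A gives a unique coefficient u of the
   projection of g onto the closure of the range of A: the functional k |-> <A k, g>
   is linear and bounded. *)
lemma projection_coeff_ex1:
  assumes inv: "info_invertible M H A" and A: "L2_op M (cspan H) A"
    and g: "g \<in> borel_measurable M" "integrable M (\<lambda>x. (g x)\<^sup>2)"
  shows "\<exists>!u. u \<in> cspan H \<and> (\<forall>k\<in>cspan H. ip M (A k) (A u) = ip M (A k) g)"
proof -
  define F where "F k = ip M (A k) g" for k
  have prod: "integrable M (\<lambda>x. A h x * g x)" if "h \<in> cspan H" for h
    using integrable_mult_L2[OF L2_opD(1)[OF A that] g(1) L2_opD(2)[OF A that] g(2)] .
  have Flin: "F (a *\<^sub>R h + b *\<^sub>R k) = a * F h + b * F k"
    if hk: "h \<in> cspan H" "k \<in> cspan H" for h k a b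
  proof -
    have hk': "a *\<^sub>R h + b *\<^sub>R k \<in> cspan H"
      using hk subspace_cspan[of H] by (simp add: subspace_add subspace_scale)
    have linA: "AE x in M. A (a *\<^sub>R h + b *\<^sub>R k) x = a * A h x + b * A k x"
      using A hk unfolding L2_op_def by blast
    have "F (a *\<^sub>R h + b *\<^sub>R k) = integral\<^sup>L M (\<lambda>x. a * (A h x * g x) + b * (A k x * g x))"
      unfolding F_def ip_def
    proof (rule integral_cong_AE)
      show "(\<lambda>x. A (a *\<^sub>R h + b *\<^sub>R k) x * g x) \<in> borel_measurable M"
        using L2_opD(1)[OF A hk'] g(1) by measurable
      show "(\<lambda>x. a * (A h x * g x) + b * (A k x * g x)) \<in> borel_measurable M"
        using L2_opD(1)[OF A hk(1)] L2_opD(1)[OF A hk(2)] g(1) by measurable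
      show "AE x in M. A (a *\<^sub>R h + b *\<^sub>R k) x * g x = a * (A h x * g x) + b * (A k x * g x)"
        using linA by eventually_elim (simp add: algebra_simps)
    qed
    also have "\<dots> = a * F h + b * F k"
      unfolding F_def ip_def using prod[OF hk(1)] prod[OF hk(2)] by simp
    finally show ?thesis .
  qed
  obtain CA where CA: "\<forall>h\<in>cspan H. ip M (A h) (A h) \<le> CA * (norm h)\<^sup>2"
    using A unfolding L2_op_def by blast
  define G where "G = integral\<^sup>L M (\<lambda>x. (g x)\<^sup>2)"
  have Fbound: "\<bar>F h\<bar> \<le> ((\<bar>CA\<bar> + G) / 2) * norm h" if h: "h \<in> cspan H" for h
  proof (cases "h = 0")
    case True
    then show ?thesis
      using Flin[OF h h, of 0 0] by simp
  next
    case False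
    define n where "n = norm h"
    have n: "n > 0" using False by (simp add: n_def)
    have "\<bar>F h\<bar> \<le> integral\<^sup>L M (\<lambda>x. \<bar>A h x * g x\<bar>)"
      unfolding F_def ip_def by (rule integral_abs_bound)
    also have "\<dots> \<le> integral\<^sup>L M (\<lambda>x. ((A h x)\<^sup>2 / n + n * (g x)\<^sup>2) / 2)"
      using prod[OF h] L2_opD[OF A h] g abs_mult_le_weighted_squares[OF n]
      by (intro integral_mono) auto
    also have "\<dots> = (ip M (A h) (A h) / n + n * G) / 2"
      using L2_opD[OF A h] g by (simp add: ip_def G_def power2_eq_square)
    also have "\<dots> \<le> (\<bar>CA\<bar> * n\<^sup>2 / n + n * G) / 2"
    proof -
      have "CA * n\<^sup>2 \<le> \<bar>CA\<bar> * n\<^sup>2" by (intro mult_right_mono) auto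
      moreover have "ip M (A h) (A h) \<le> CA * n\<^sup>2" using CA h unfolding n_def by blast
      ultimately have "ip M (A h) (A h) \<le> \<bar>CA\<bar> * n\<^sup>2" by linarith
      then have "ip M (A h) (A h) / n \<le> \<bar>CA\<bar> * n\<^sup>2 / n"
        using n by (simp add: divide_right_mono)
      then show ?thesis by (rule divide_right_mono[OF add_right_mono]) simp
    qed
    also have "\<dots> = ((\<bar>CA\<bar> + G) / 2) * n"
      using n by (simp add: field_simps power2_eq_square)
    finally show ?thesis by (simp add: n_def)
  qed
  have "\<exists>!u. u \<in> cspan H \<and> (\<forall>k\<in>cspan H. ip M (A k) (A u) = F k)"
  proof (rule mp[OF inv[unfolded info_invertible_def, THEN spec[of _ F]]], intro conjI)
    show "\<forall>h\<in>cspan H. \<forall>k\<in>cspan H. \<forall>a b::real. F (a *\<^sub>R h + b *\<^sub>R k) = a * F h + b * F k"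
      using Flin by blast
    show "\<exists>C. \<forall>h\<in>cspan H. \<bar>F h\<bar> \<le> C * norm h"
      using Fbound by blast
  qed
  then show ?thesis unfolding F_def .
qed

lemma The_transport:
  assumes ex1: "\<exists>!u. u \<in> V \<and> P u" and onto: "D ` V = V"
    and corr: "\<And>u. u \<in> V \<Longrightarrow> Q (D u) \<longleftrightarrow> P u"
  shows "(THE v. v \<in> V \<and> Q v) = D (THE u. u \<in> V \<and> P u)"
proof (rule the_equality)
  let ?u = "THE u. u \<in> V \<and> P u"
  have u: "?u \<in> V" "P ?u" using theI'[OF ex1] by auto
  then show "D ?u \<in> V \<and> Q (D ?u)" using onto corr by blast
  fix v assume v: "v \<in> V \<and> Q v"
  then obtain w where "w \<in> V" "v = D w" using onto by blast
  with v corr have "w \<in> V \<and> P w" by blast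
  with ex1 u show "v = D ?u" using \<open>v = D w\<close> by blast
qed

lemma eff_info_cong_AE:
  assumes "\<And>j. (\<lambda>x. e x $ j) \<in> borel_measurable M" "\<And>j. (\<lambda>x. e' x $ j) \<in> borel_measurable M"
    and "AE x in M. e x = e' x"
  shows "eff_info M e = eff_info M e'"
  unfolding eff_info_def vec_eq_iff
proof (intro allI)
  fix i j
  have "integral\<^sup>L M (\<lambda>x. e x $ i * e x $ j) = integral\<^sup>L M (\<lambda>x. e' x $ i * e' x $ j)"
    by (intro integral_cong_AE) (use assms in auto)
  then show "(\<chi> i j. integral\<^sup>L M (\<lambda>x. e x $ i * e x $ j)) $ i $ j =
             (\<chi> i j. integral\<^sup>L M (\<lambda>x. e' x $ i * e' x $ j)) $ i $ j" by simp
qed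

lemma eff_score_reparam_invariant:
  fixes s :: "'x \<Rightarrow> real^'p"
  assumes inv: "info_invertible M H A"
    and A: "L2_op M (cspan H) A" and Ab: "L2_op M (cspan H) Ab"
    and onto: "D ` cspan H = cspan H"
    and agree: "\<And>h. h \<in> cspan H \<Longrightarrow> AE x in M. Ab (D h) x = A h x"
    and s: "\<And>j. (\<lambda>x. s x $ j) \<in> borel_measurable M" "\<And>j. integrable M (\<lambda>x. (s x $ j)\<^sup>2)"
  shows "(AE x in M. eff_score M H A s x = eff_score M H Ab s x) \<and>
         eff_info M (eff_score M H A s) = eff_info M (eff_score M H Ab s)"
proof -
  define U where "U j = (THE u. u \<in> cspan H \<and>
                    (\<forall>k\<in>cspan H. ip M (A k) (A u) = ip M (A k) (\<lambda>y. s y $ j)))" for j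
  have ex1: "\<exists>!u. u \<in> cspan H \<and> (\<forall>k\<in>cspan H. ip M (A k) (A u) = ip M (A k) (\<lambda>y. s y $ j))" for j
    using projection_coeff_ex1[OF inv A s(1) s(2)] .
  have U: "U j \<in> cspan H" for j
    using theI'[OF ex1] unfolding U_def by blast
  have DU: "D (U j) \<in> cspan H" for j using U onto by blast
  text \<open>The normal equations for Ab at D u are those for A at u, since Ab \<circ> D = A a.e.\<close>
  have normal_eq: "(\<forall>k\<in>cspan H. ip M (Ab k) (Ab (D u)) = ip M (Ab k) (\<lambda>y. s y $ j)) \<longleftrightarrow>
                   (\<forall>k\<in>cspan H. ip M (A k) (A u) = ip M (A k) (\<lambda>y. s y $ j))"
    if u: "u \<in> cspan H" for u j
  proof -
    have Du: "D u \<in> cspan H" using u onto by blast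
    have ip_eq: "ip M (Ab (D k)) (Ab (D u)) = ip M (A k) (A u)"
      "ip M (Ab (D k)) (\<lambda>y. s y $ j) = ip M (A k) (\<lambda>y. s y $ j)"
      if k: "k \<in> cspan H" for k
    proof -
      have Dk: "D k \<in> cspan H" using k onto by blast
      show "ip M (Ab (D k)) (Ab (D u)) = ip M (A k) (A u)"
        by (rule ip_cong_AE[OF L2_opD(1)[OF Ab Dk] L2_opD(1)[OF Ab Du] L2_opD(1)[OF A k]
              L2_opD(1)[OF A u] agree[OF k] agree[OF u]])
      show "ip M (Ab (D k)) (\<lambda>y. s y $ j) = ip M (A k) (\<lambda>y. s y $ j)"
        by (rule ip_cong_AE[OF L2_opD(1)[OF Ab Dk] s(1) L2_opD(1)[OF A k] s(1) agree[OF k]]) simp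
    qed
    have "(\<forall>k\<in>cspan H. ip M (Ab k) (Ab (D u)) = ip M (Ab k) (\<lambda>y. s y $ j)) \<longleftrightarrow>
          (\<forall>k\<in>D ` cspan H. ip M (Ab k) (Ab (D u)) = ip M (Ab k) (\<lambda>y. s y $ j))"
      by (simp only: onto)
    also have "\<dots> \<longleftrightarrow> (\<forall>k\<in>cspan H. ip M (Ab (D k)) (Ab (D u)) = ip M (Ab (D k)) (\<lambda>y. s y $ j))"
      by blast
    also have "\<dots> \<longleftrightarrow> (\<forall>k\<in>cspan H. ip M (A k) (A u) = ip M (A k) (\<lambda>y. s y $ j))"
      using ip_eq by simp
    finally show ?thesis .
  qed
  have coeff: "(THE v. v \<in> cspan H \<and> (\<forall>k\<in>cspan H. ip M (Ab k) (Ab v) = ip M (Ab k) (\<lambda>y. s y $ j)))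
                 = D (U j)" for j
    unfolding U_def
    by (rule The_transport[OF ex1 onto,
          where Q="\<lambda>v. \<forall>k\<in>cspan H. ip M (Ab k) (Ab v) = ip M (Ab k) (\<lambda>y. s y $ j)"])
      (rule normal_eq)
  have effA: "eff_score M H A s = (\<lambda>x. \<chi> j. s x $ j - A (U j) x)"
    unfolding eff_score_def U_def ..
  have effAb: "eff_score M H Ab s = (\<lambda>x. \<chi> j. s x $ j - Ab (D (U j)) x)"
    unfolding eff_score_def coeff ..
  have "AE x in M. \<forall>j\<in>UNIV. Ab (D (U j)) x = A (U j) x"
    by (rule AE_finite_allI) (auto intro: agree U)
  then have AE_eq: "AE x in M. eff_score M H A s x = eff_score M H Ab s x"
    unfolding effA effAb by eventually_elim (simp add: vec_eq_iff)
  have "eff_info M (eff_score M H A s) = eff_info M (eff_score M H Ab s)"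
  proof (rule eff_info_cong_AE[OF _ _ AE_eq])
    show "(\<lambda>x. eff_score M H A s x $ j) \<in> borel_measurable M" for j
      unfolding effA using s(1)[of j] L2_opD(1)[OF A U] by simp
    show "(\<lambda>x. eff_score M H Ab s x $ j) \<in> borel_measurable M" for j
      unfolding effAb using s(1)[of j] L2_opD(1)[OF Ab DU] by simp
  qed
  with AE_eq show ?thesis by blast
qed

lemma beta_score_unique:
  assumes "beta_score M L b0 s" "beta_score M' L b0 s'"
  shows "s = s'"
proof
  fix x
  have "((\<lambda>b. L b x) has_derivative (\<lambda>v. v \<bullet> s x)) (at b0)"
    "((\<lambda>b. L b x) has_derivative (\<lambda>v. v \<bullet> s' x)) (at b0)"
    using assms unfolding beta_score_def by auto
  then have "(\<lambda>v. v \<bullet> s x) = (\<lambda>v. v \<bullet> s' x)" by (rule has_derivative_unique)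
  then have "(s x - s' x) \<bullet> s x = (s x - s' x) \<bullet> s' x" by metis
  then have "(s x - s' x) \<bullet> (s x - s' x) = 0" by (simp add: inner_diff_right)
  then show "s x = s' x" by simp
qed

lemma reparam_lik_at_image:
  assumes "inj_on (\<phi> z) H" "e \<in> H"
  shows "reparam_lik H \<phi> l b (\<phi> z e) z = l b e z"
  using assms unfolding reparam_lik_def by (simp add: inv_into_f_f)

lemma hadamard_curve_derivative:
  assumes had: "hadamard_unif H \<Xi> \<phi> e0 D" and z: "z \<in> \<Xi>" and h: "h \<in> H"
    and lim: "((\<lambda>t. (\<gamma> t - e0) /\<^sub>R t) \<longlongrightarrow> h) (at 0 within {t. \<gamma> t \<in> H})"
  shows "((\<lambda>t. (\<phi> z (\<gamma> t) - \<phi> z e0) /\<^sub>R t) \<longlongrightarrow> D z h) (at 0 within {t. \<gamma> t \<in> H})"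
  unfolding tendsto_at_iff_sequentially comp_def
proof (intro allI impI)
  fix X :: "nat \<Rightarrow> real" assume XS: "\<forall>n. X n \<in> {t. \<gamma> t \<in> H} - {0}" and X0: "X \<longlonglongrightarrow> 0"
  define hs where "hs n = (\<gamma> (X n) - e0) /\<^sub>R X n" for n
  have hs_lim: "hs \<longlonglongrightarrow> h"
    using lim XS X0 unfolding tendsto_at_iff_sequentially comp_def hs_def by blast
  have curve: "e0 + X n *\<^sub>R hs n = \<gamma> (X n)" for n
    using XS by (simp add: hs_def)
  have unif: "\<forall>\<epsilon>>0. \<forall>\<^sub>F n in sequentially. \<forall>z\<in>\<Xi>.
          norm ((\<phi> z (e0 + X n *\<^sub>R hs n) - \<phi> z e0) /\<^sub>R X n - D z h) < \<epsilon>"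
  proof (rule mp[OF had[unfolded hadamard_unif_def, THEN spec[of _ X],
        THEN spec[of _ "\<lambda>n z. hs n"], THEN spec[of _ "\<lambda>z. h"]]], intro conjI allI ballI impI)
    show "X \<longlonglongrightarrow> 0" by (rule X0)
    show "X n \<noteq> 0" for n using XS by auto
    show "e0 + X n *\<^sub>R hs n \<in> H" for n using XS curve[of n] by auto
    show "h \<in> H" by (rule h)
    show "\<forall>\<^sub>F n in sequentially. \<forall>z\<in>\<Xi>. norm (hs n - h) < \<epsilon>" if "\<epsilon> > 0" for \<epsilon>
      using hs_lim that by (simp add: tendsto_iff dist_norm)
  qed
  show "(\<lambda>n. (\<phi> z (\<gamma> (X n)) - \<phi> z e0) /\<^sub>R X n) \<longlonglongrightarrow> D z h"
    unfolding tendsto_iff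
  proof (intro allI impI)
    fix \<epsilon> :: real assume "\<epsilon> > 0"
    then have "\<forall>\<^sub>F n in sequentially. \<forall>z\<in>\<Xi>.
                 norm ((\<phi> z (e0 + X n *\<^sub>R hs n) - \<phi> z e0) /\<^sub>R X n - D z h) < \<epsilon>"
      using unif by blast
    then show "\<forall>\<^sub>F n in sequentially. dist ((\<phi> z (\<gamma> (X n)) - \<phi> z e0) /\<^sub>R X n) (D z h) < \<epsilon>"
    proof (rule eventually_mono)
      fix n assume "\<forall>z\<in>\<Xi>. norm ((\<phi> z (e0 + X n *\<^sub>R hs n) - \<phi> z e0) /\<^sub>R X n - D z h) < \<epsilon>"
      then have "norm ((\<phi> z (e0 + X n *\<^sub>R hs n) - \<phi> z e0) /\<^sub>R X n - D z h) < \<epsilon>"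
        using z by blast
      then show "dist ((\<phi> z (\<gamma> (X n)) - \<phi> z e0) /\<^sub>R X n) (D z h) < \<epsilon>"
        by (simp only: curve dist_norm)
    qed
  qed
qed

(* Chain rule for score operators: if psi maps every curve with derivative h to a curve with
   derivative Dh, the score operator of the model reparameterized by psi sends Dh to the
   same score A h (pointwise limits of the same difference quotients). *)
lemma score_op_reparam_chain:
  fixes \<psi> :: "'h::real_normed_vector \<Rightarrow> 'h"
  assumes A: "score_op M \<Theta> H L e0 A"
    and Ab: "score_op M' (\<psi> ` \<Theta>) H' (\<lambda>e. L (inv_into \<Theta> \<psi> e)) (\<psi> e0) Ab"
    and maps: "\<psi> ` \<Theta> \<subseteq> \<Theta>" and inj: "inj_on \<psi> \<Theta>" and e0: "e0 \<in> \<Theta>"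
    and h: "h \<in> H" and Dh: "Dh \<in> cspan H'"
    and curve_deriv: "\<And>\<gamma>. ((\<lambda>t. (\<gamma> t - e0) /\<^sub>R t) \<longlongrightarrow> h) (at 0 within {t. \<gamma> t \<in> \<Theta>}) \<Longrightarrow>
                        ((\<lambda>t. (\<psi> (\<gamma> t) - \<psi> e0) /\<^sub>R t) \<longlongrightarrow> Dh) (at 0 within {t. \<gamma> t \<in> \<Theta>})"
  shows "Ab Dh x = A h x"
proof -
  obtain \<gamma> where \<gamma>0: "\<gamma> 0 = e0" and nontriv: "at 0 within {t. \<gamma> t \<in> \<Theta>} \<noteq> bot"
    and \<gamma>lim: "((\<lambda>t. (\<gamma> t - e0) /\<^sub>R t) \<longlongrightarrow> h) (at 0 within {t. \<gamma> t \<in> \<Theta>})"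
    using A h unfolding score_op_def by blast
  define S where "S = {t. \<gamma> t \<in> \<Theta>}"
  text \<open>Push the curve forward by \<psi>, sending the times outside S to a point outside \<psi> ` \<Theta>,
    so that the pushed curve lies in the reparameterized space exactly on S.\<close>
  define y0 where "y0 = (SOME y. y \<notin> \<psi> ` \<Theta>)"
  define \<gamma>' where "\<gamma>' t = (if \<gamma> t \<in> \<Theta> then \<psi> (\<gamma> t) else y0)" for t
  have S': "{t. \<gamma>' t \<in> \<psi> ` \<Theta>} = S"
  proof (cases "\<exists>y. y \<notin> \<psi> ` \<Theta>")
    case True
    then have "y0 \<notin> \<psi> ` \<Theta>" unfolding y0_def by (rule someI_ex)
    then show ?thesis unfolding \<gamma>'_def S_def by auto
  next
    case False
    then have "\<Theta> = UNIV" using maps by auto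
    then show ?thesis unfolding \<gamma>'_def S_def by auto
  qed
  have in_S: "\<forall>\<^sub>F t in at 0 within S. t \<in> S" by (auto simp: eventually_at_filter)
  have \<gamma>'0: "\<gamma>' 0 = \<psi> e0" unfolding \<gamma>'_def using \<gamma>0 e0 by simp
  have \<gamma>'lim: "((\<lambda>t. (\<gamma>' t - \<psi> e0) /\<^sub>R t) \<longlongrightarrow> Dh) (at 0 within {t. \<gamma>' t \<in> \<psi> ` \<Theta>})"
    unfolding S'
    by (rule tendsto_cong[THEN iffD1, OF _ curve_deriv[OF \<gamma>lim, folded S_def]],
        rule eventually_mono[OF in_S]) (simp add: \<gamma>'_def S_def)
  have "((\<lambda>t. (L (inv_into \<Theta> \<psi> (\<gamma>' t)) x - L (inv_into \<Theta> \<psi> (\<psi> e0)) x) / t) \<longlongrightarrow> Ab Dh x)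
          (at 0 within {t. \<gamma>' t \<in> \<psi> ` \<Theta>})"
    using Ab Dh \<gamma>'0 \<gamma>'lim unfolding score_op_def by blast
  then have "((\<lambda>t. (L (inv_into \<Theta> \<psi> (\<gamma>' t)) x - L (inv_into \<Theta> \<psi> (\<psi> e0)) x) / t) \<longlongrightarrow> Ab Dh x)
          (at 0 within S)"
    unfolding S' .
  then have lim_Ab: "((\<lambda>t. (L (\<gamma> t) x - L e0 x) / t) \<longlongrightarrow> Ab Dh x) (at 0 within S)"
    by (rule tendsto_cong[THEN iffD1, rotated], intro eventually_mono[OF in_S])
      (simp add: \<gamma>'_def S_def inv_into_f_f[OF inj] e0)
  have lim_A: "((\<lambda>t. (L (\<gamma> t) x - L e0 x) / t) \<longlongrightarrow> A h x) (at 0 within S)"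
    using A h subset_cspan \<gamma>0 \<gamma>lim unfolding score_op_def S_def by blast
  show ?thesis
    using tendsto_unique[OF nontriv[folded S_def] lim_Ab lim_A] .
qed

theorem lemma1:
  fixes \<mu> :: "'x measure"
    and l :: "real^'p \<Rightarrow> 'h::banach \<Rightarrow> real^'q \<Rightarrow> 'x \<Rightarrow> real"
    and H :: "'h set" and \<Xi> :: "(real^'q) set"
    and \<phi> :: "real^'q \<Rightarrow> 'h \<Rightarrow> 'h" and D :: "'h \<Rightarrow> real^'q \<Rightarrow> 'h \<Rightarrow> 'h"
    and \<beta>0 :: "real^'p" and \<eta>b0 :: 'h
    and \<beta> :: "real^'p" and \<eta> :: 'h and \<zeta> :: "real^'q"
    and s sb :: "'x \<Rightarrow> real^'p" and A Ab :: "'h \<Rightarrow> 'x \<Rightarrow> real"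
  assumes model: "\<forall>b e z. e \<in> H \<longrightarrow> z \<in> \<Xi> \<longrightarrow>
                    l b e z \<in> borel_measurable \<mu> \<and> prob_space (model_measure \<mu> l b e z)"
    and frr: "full_rank_reparam H \<Xi> \<phi> D l \<beta>0 \<eta>b0"
    and eta: "\<eta> \<in> H" and zeta: "\<zeta> \<in> \<Xi>"
    and score_beta: "beta_score (model_measure \<mu> l \<beta> \<eta> \<zeta>) (\<lambda>b. l b \<eta> \<zeta>) \<beta> s"
    and score_eta: "score_op (model_measure \<mu> l \<beta> \<eta> \<zeta>) H H (\<lambda>e. l \<beta> e \<zeta>) \<eta> A"
    and info_inv: "info_invertible (model_measure \<mu> l \<beta> \<eta> \<zeta>) H A"
    and score_beta_bar: "beta_score (model_measure \<mu> (reparam_lik H \<phi> l) \<beta> (\<phi> \<zeta> \<eta>) \<zeta>)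
                           (\<lambda>b. reparam_lik H \<phi> l b (\<phi> \<zeta> \<eta>) \<zeta>) \<beta> sb"
    and score_eta_bar: "score_op (model_measure \<mu> (reparam_lik H \<phi> l) \<beta> (\<phi> \<zeta> \<eta>) \<zeta>) (\<phi> \<zeta> ` H) H
                           (\<lambda>e. reparam_lik H \<phi> l \<beta> e \<zeta>) (\<phi> \<zeta> \<eta>) Ab"
  shows "(AE x in model_measure \<mu> l \<beta> \<eta> \<zeta>.
            eff_score (model_measure \<mu> l \<beta> \<eta> \<zeta>) H A s x =
            eff_score (model_measure \<mu> (reparam_lik H \<phi> l) \<beta> (\<phi> \<zeta> \<eta>) \<zeta>) H Ab sb x) \<and>
         eff_info (model_measure \<mu> l \<beta> \<eta> \<zeta>) (eff_score (model_measure \<mu> l \<beta> \<eta> \<zeta>) H A s) =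
         eff_info (model_measure \<mu> l \<beta> \<eta> \<zeta>)
           (eff_score (model_measure \<mu> (reparam_lik H \<phi> l) \<beta> (\<phi> \<zeta> \<eta>) \<zeta>) H Ab sb)"
proof -
  let ?M = "model_measure \<mu> l \<beta> \<eta> \<zeta>"
  have maps: "\<phi> \<zeta> ` H \<subseteq> H" and inj: "inj_on (\<phi> \<zeta>) H"
    using frr zeta unfolding full_rank_reparam_def by auto
  have had: "hadamard_unif H \<Xi> \<phi> \<eta> (D \<eta>)"
    using frr eta unfolding full_rank_reparam_def by auto
  have Dlin: "\<forall>h\<in>cspan H. \<forall>k\<in>cspan H. \<forall>a b::real.
                D \<eta> \<zeta> (a *\<^sub>R h + b *\<^sub>R k) = a *\<^sub>R D \<eta> \<zeta> h + b *\<^sub>R D \<eta> \<zeta> k"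
    and Dbounded: "\<exists>C. \<forall>h\<in>cspan H. norm (D \<eta> \<zeta> h) \<le> C * norm h"
    and Donto: "D \<eta> \<zeta> ` cspan H = cspan H"
    using frr eta zeta unfolding full_rank_reparam_def by blast+
  note at_image = reparam_lik_at_image[where \<phi>=\<phi> and z=\<zeta>, OF inj eta]
  have same_model: "model_measure \<mu> (reparam_lik H \<phi> l) \<beta> (\<phi> \<zeta> \<eta>) \<zeta> = ?M"
    unfolding model_measure_def at_image ..
  have same_score: "sb = s"
    using beta_score_unique[OF score_beta]
      score_beta_bar[unfolded at_image] by blast
  have A: "L2_op ?M (cspan H) A" by (rule score_op_imp_L2_op[OF score_eta])
  have Ab: "L2_op ?M (cspan H) Ab" using score_op_imp_L2_op[OF score_eta_bar] by (simp only: same_model)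
  have AbD: "L2_op ?M (cspan H) (\<lambda>h. Ab (D \<eta> \<zeta> h))"
    using L2_op_compose[OF Ab _ Dlin Dbounded] Donto by simp
  have "\<forall>h\<in>H. AE x in ?M. Ab (D \<eta> \<zeta> h) x = A h x"
  proof (intro ballI AE_I2)
    fix h x assume h: "h \<in> H"
    have "D \<eta> \<zeta> h \<in> cspan H" using h subset_cspan Donto by blast
    then show "Ab (D \<eta> \<zeta> h) x = A h x"
      by (rule score_op_reparam_chain[OF score_eta score_eta_bar[unfolded reparam_lik_def]
            maps inj eta h _ hadamard_curve_derivative[OF had zeta h]])
  qed
  then have agree: "AE x in ?M. Ab (D \<eta> \<zeta> h) x = A h x" if "h \<in> cspan H" for h
    using L2_op_agree_cspan[OF AbD A _ that] by blast
  have s: "(\<lambda>x. s x $ j) \<in> borel_measurable ?M" "integrable ?M (\<lambda>x. (s x $ j)\<^sup>2)" for j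
    using score_beta unfolding beta_score_def L2_0_def by auto
  show ?thesis
    using eff_score_reparam_invariant[OF info_inv A Ab Donto agree s] unfolding same_model same_score .
qed

end
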